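(* Let $m,n$ be positive integers with $m$ even, and let $R$ be an $m\times n$ rectangular permutation matrix. If $R$ is not centrosymmetric, then there exist $m\times n$ centrosymmetric rectangular permutation matrices $Q_1\neq Q_2$ such that $R+R^\pi=Q_1+Q_2$.
   Context: A rectangular permutation matrix is an $m\times n$ $(0,1)$-matrix with exactly one $1$ in each row. For $A=(a_{i,j})\in M_{m,n}$, $A^\pi$ denotes the matrix with $(A^\pi)_{i,j}=a_{m+1-i,n+1-j}$; $A$ is centrosymmetric if $A=A^\pi$. *)

theory Defs
  imports Main
begin

text \<open>An m x n matrix is represented as a function nat => nat => int, with
  rows indexed by 1..m and columns by 1..n; entries outside this range are
  required to be 0 so that equality of functions is equality of matrices.\<close>

definition is_mat :: "nat \<Rightarrow> nat \<Rightarrow> (nat \<Rightarrow> nat \<Rightarrow> int) \<Rightarrow> bool" where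
  "is_mat m n A \<longleftrightarrow> (\<forall>i j. \<not> (1 \<le> i \<and> i \<le> m \<and> 1 \<le> j \<and> j \<le> n) \<longrightarrow> A i j = 0)"

definition rect_perm :: "nat \<Rightarrow> nat \<Rightarrow> (nat \<Rightarrow> nat \<Rightarrow> int) \<Rightarrow> bool" where
  "rect_perm m n A \<longleftrightarrow> is_mat m n A
     \<and> (\<forall>i\<in>{1..m}. \<forall>j\<in>{1..n}. A i j = 0 \<or> A i j = 1)
     \<and> (\<forall>i\<in>{1..m}. card {j\<in>{1..n}. A i j = 1} = 1)"

definition mat_pi :: "nat \<Rightarrow> nat \<Rightarrow> (nat \<Rightarrow> nat \<Rightarrow> int) \<Rightarrow> (nat \<Rightarrow> nat \<Rightarrow> int)" where
  "mat_pi m n A = (\<lambda>i j. if 1 \<le> i \<and> i \<le> m \<and> 1 \<le> j \<and> j \<le> n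
                          then A (m + 1 - i) (n + 1 - j) else 0)"

definition centrosymmetric :: "nat \<Rightarrow> nat \<Rightarrow> (nat \<Rightarrow> nat \<Rightarrow> int) \<Rightarrow> bool" where
  "centrosymmetric m n A \<longleftrightarrow> A = mat_pi m n A"

definition mat_add :: "(nat \<Rightarrow> nat \<Rightarrow> int) \<Rightarrow> (nat \<Rightarrow> nat \<Rightarrow> int) \<Rightarrow> (nat \<Rightarrow> nat \<Rightarrow> int)" where
  "mat_add A B = (\<lambda>i j. A i j + B i j)"

end

theory Submission
  imports Defs
begin

text \<open>Let Q1 consist of the upper half of the rows of R and the lower half of the rows
  of R^pi, and Q2 the other way round. Since m is even, the point reflection pi swaps
  the two halves of the rows, so it maps Q1 to itself and Q2 to itself. Row by row,
  Q1 + Q2 = R + R^pi, and Q1 = Q2 would force R = R^pi.\<close>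

definition row_splice :: "nat \<Rightarrow> (nat \<Rightarrow> nat \<Rightarrow> int) \<Rightarrow> (nat \<Rightarrow> nat \<Rightarrow> int) \<Rightarrow> (nat \<Rightarrow> nat \<Rightarrow> int)"
  where "row_splice k A B = (\<lambda>i j. if i \<le> k then A i j else B i j)"

lemma card_reflect_interval:
  fixes n :: nat
  shows "card {j\<in>{1..n}. P (n + 1 - j)} = card {j\<in>{1..n}. P j}"
proof -
  have "bij_betw (\<lambda>j. n + 1 - j) {j\<in>{1..n}. P (n + 1 - j)} {j\<in>{1..n}. P j}"
    by (rule bij_betw_byWitness[where f' = "\<lambda>j. n + 1 - j"]) auto
  then show ?thesis
    by (rule bij_betw_same_card)
qed

lemma mat_pi_mat_pi:
  assumes "is_mat m n A"
  shows "mat_pi m n (mat_pi m n A) = A"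
  using assms by (auto simp: mat_pi_def is_mat_def intro!: ext)

lemma rect_perm_mat_pi:
  assumes "rect_perm m n A"
  shows "rect_perm m n (mat_pi m n A)"
proof -
  have "card {j\<in>{1..n}. mat_pi m n A i j = 1} = 1" if "i \<in> {1..m}" for i
  proof -
    have "{j\<in>{1..n}. mat_pi m n A i j = 1} = {j\<in>{1..n}. A (m + 1 - i) (n + 1 - j) = 1}"
      using that by (auto simp: mat_pi_def)
    also have "card \<dots> = card {j\<in>{1..n}. A (m + 1 - i) j = 1}"
      by (rule card_reflect_interval)
    also have "\<dots> = 1"
    proof -
      have "m + 1 - i \<in> {1..m}"
        using that by auto
      then show ?thesis
        using assms unfolding rect_perm_def by blast
    qed
    finally show ?thesis .
  qed
  moreover have "mat_pi m n A i j = 0 \<or> mat_pi m n A i j = 1" for i j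
  proof (cases "1 \<le> i \<and> i \<le> m \<and> 1 \<le> j \<and> j \<le> n")
    case True
    then have "m + 1 - i \<in> {1..m}" and "n + 1 - j \<in> {1..n}"
      by auto
    then show ?thesis
      using assms True unfolding rect_perm_def mat_pi_def by auto
  qed (auto simp: mat_pi_def)
  moreover have "is_mat m n (mat_pi m n A)"
    by (simp add: is_mat_def mat_pi_def)
  ultimately show ?thesis
    unfolding rect_perm_def by blast
qed

lemma rect_perm_row_splice:
  assumes "rect_perm m n A" and "rect_perm m n B"
  shows "rect_perm m n (row_splice k A B)"
proof -
  have "card {j\<in>{1..n}. row_splice k A B i j = 1} = 1" if "i \<in> {1..m}" for i
    using assms that unfolding rect_perm_def row_splice_def by (cases "i \<le> k") auto
  then show ?thesis
    using assms unfolding rect_perm_def is_mat_def row_splice_def by auto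
qed

lemma mat_pi_row_splice:
  assumes "m = 2 * h"
  shows "mat_pi m n (row_splice h A B) = row_splice h (mat_pi m n B) (mat_pi m n A)"
  using assms by (auto simp: mat_pi_def row_splice_def intro!: ext)

lemma centrosymmetric_row_splice_mat_pi:
  assumes "m = 2 * h" and "is_mat m n A"
  shows "centrosymmetric m n (row_splice h A (mat_pi m n A))"
  using assms by (simp add: centrosymmetric_def mat_pi_row_splice mat_pi_mat_pi)

lemma mat_add_row_splice_swap:
  "mat_add (row_splice k A B) (row_splice k B A) = mat_add A B"
  by (auto simp: mat_add_def row_splice_def intro!: ext)

lemma row_splice_swap_eq_iff:
  "row_splice k A B = row_splice k B A \<longleftrightarrow> A = B"
  unfolding row_splice_def fun_eq_iff by (metis (full_types))

theorem mainTheorem2: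
  fixes m n :: nat and R :: "nat \<Rightarrow> nat \<Rightarrow> int"
  assumes "m > 0" and "n > 0" and "even m"
    and "rect_perm m n R"
    and "\<not> centrosymmetric m n R"
  shows "\<exists>Q1 Q2. rect_perm m n Q1 \<and> rect_perm m n Q2
           \<and> centrosymmetric m n Q1 \<and> centrosymmetric m n Q2
           \<and> Q1 \<noteq> Q2
           \<and> mat_add R (mat_pi m n R) = mat_add Q1 Q2"
proof -
  obtain h where m: "m = 2 * h"
    using \<open>even m\<close> by blast
  let ?P = "mat_pi m n R"
  have R: "is_mat m n R"
    using \<open>rect_perm m n R\<close> by (simp add: rect_perm_def)
  have P: "rect_perm m n ?P"
    using \<open>rect_perm m n R\<close> by (rule rect_perm_mat_pi)
  have "centrosymmetric m n (row_splice h R ?P)"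
    using m R by (rule centrosymmetric_row_splice_mat_pi)
  moreover have "centrosymmetric m n (row_splice h ?P R)"
    using centrosymmetric_row_splice_mat_pi[OF m, of n ?P] P
    by (simp add: rect_perm_def mat_pi_mat_pi[OF R])
  moreover have "row_splice h R ?P \<noteq> row_splice h ?P R"
    using \<open>\<not> centrosymmetric m n R\<close> by (simp add: row_splice_swap_eq_iff centrosymmetric_def)
  ultimately show ?thesis
    using rect_perm_row_splice[OF \<open>rect_perm m n R\<close> P] rect_perm_row_splice[OF P \<open>rect_perm m n R\<close>]
      mat_add_row_splice_swap[symmetric]
    by blast
qed

end
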